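(* The action map $\Omega_u\times Int(P)\to\Omega_u$, $(A,a)\mapsto Aa$, is open.
   Context: Standing assumptions: $G$ is a second countable locally compact group with left Haar measure $dg$; $P\subset G$ is a closed subsemigroup with identity $e\in P$, such that $G=PP^{-1}$ and the interior $Int(P)$ of $P$ is dense in $P$. $\mathcal{C}(G)$ denotes the space of closed subsets of $G$ with the Vietoris (Fell) topology, a compact metrisable topology in which, for a metric $d$ on $G$ compatible with its topology, a sequence $A_n$ converges to $A$ iff $\{x:\limsup_n d(x,A_n)=0\}=\{x:\liminf_n d(x,A_n)=0\}=A$. $\Omega_u:=\{A\in\mathcal{C}(G): P^{-1}\subset A,\ P^{-1}A\subset A\}$, a compact subspace of $\mathcal{C}(G)$, with right $P$-action $A\cdot a=Aa=\{xa:x\in A\}$. *)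

theory Defs
  imports "HOL-Analysis.Analysis"
begin

text \<open>The group G is written additively (class group_add is NOT assumed commutative):
  x y^{-1} becomes x + (- y), identity e becomes 0.\<close>

definition fell_topology :: "('a::topological_space) set topology" where
  "fell_topology =
     subtopology
       (topology_generated_by
          ({{A. A \<inter> K = {}} | K. compact K} \<union> {{A. A \<inter> U \<noteq> {}} | U. open U}))
       {A. closed A}"

definition Omega_u :: "('a::{topological_space, group_add}) set \<Rightarrow> 'a set set" where
  "Omega_u P = {A. closed A \<and> uminus ` P \<subseteq> A \<and>
                   (\<forall>p\<in>P. \<forall>x\<in>A. - p + x \<in> A)}"

definition right_translate :: "('a::group_add) set \<Rightarrow> 'a \<Rightarrow> 'a set" where
  "right_translate A a = (\<lambda>x. x + a) ` A"

end

theory Submission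
  imports Defs
begin

text \<open>
  Write the group additively, so that \<open>A \<cdot> a\<close> is \<open>right_translate A a\<close> and
  \<open>A \<cdot> a\<^sup>-\<^sup>1\<close> is \<open>right_translate A (-a)\<close>.  Let \<open>(A, a) \<in> U \<times> V\<close> with \<open>U\<close> open in \<open>\<Omega>\<^sub>u\<close> and
  \<open>V \<subseteq> Int(P)\<close> open, and put \<open>Y = A \<cdot> a\<close>; then \<open>a \<in> Y\<close> because \<open>0 \<in> A\<close>.  The inverse
  map \<open>(B, b) \<mapsto> B \<cdot> b\<^sup>-\<^sup>1\<close> is continuous at \<open>(Y, a)\<close> (this is where local compactness enters),
  so there are neighbourhoods \<open>N\<close> of \<open>Y\<close> and \<open>T\<close> of \<open>a\<close> with \<open>B \<cdot> b\<^sup>-\<^sup>1 \<in> U\<close> for \<open>B \<in> N\<close>,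
  \<open>b \<in> T\<close>.  Every \<open>B \<in> \<Omega>\<^sub>u\<close> that lies in \<open>N\<close> and hits the open set \<open>T \<inter> V\<close> in a point \<open>b\<close> is
  then the image \<open>(B \<cdot> b\<^sup>-\<^sup>1) \<cdot> b\<close> of a point of \<open>U \<times> V\<close>, since \<open>\<Omega>\<^sub>u\<close> is stable under \<open>B \<mapsto> B \<cdot> b\<^sup>-\<^sup>1\<close>
  for \<open>b \<in> B\<close>.  Hence the image of \<open>U \<times> V\<close> is a neighbourhood of \<open>Y\<close>.
\<close>

lemma right_translate_eq_vimage: "right_translate A (a::'a::group_add) = (\<lambda>x. x + - a) -` A"
proof (intro set_eqI iffI)
  fix x assume "x \<in> (\<lambda>x. x + - a) -` A"
  moreover have "x = (x + - a) + a" by (simp add: add.assoc)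
  ultimately show "x \<in> right_translate A a" unfolding right_translate_def by blast
qed (auto simp: right_translate_def add.assoc)

lemma closed_right_translate:
  assumes "closed A" shows "closed (right_translate A (a::'a::topological_group_add))"
  unfolding right_translate_eq_vimage by (rule closed_vimage[OF assms]) (intro continuous_intros)

lemma right_translate_cancel: "right_translate (right_translate B (-b)) b = (B::'a::group_add set)"
  unfolding right_translate_def image_image by (simp add: add.assoc)

subsection \<open>Stability properties of \<open>\<Omega>\<^sub>u\<close>\<close>

lemma Omega_u_closed: "A \<in> Omega_u P \<Longrightarrow> closed A"
  by (simp add: Omega_u_def)

lemma right_translate_in_Omega_u:
  fixes P :: "'a::topological_group_add set"
  assumes semigroup: "\<forall>p\<in>P. \<forall>q\<in>P. p + q \<in> P" and A: "A \<in> Omega_u P" and a: "a \<in> P"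
  shows "right_translate A a \<in> Omega_u P"
  unfolding Omega_u_def
proof (intro CollectI conjI ballI subsetI)
  show "closed (right_translate A a)" using A by (simp add: Omega_u_closed closed_right_translate)
  fix y assume "y \<in> uminus ` P"
  then obtain p where p: "p \<in> P" "y = - p" by blast
  have "- (a + p) \<in> A" using A semigroup a p by (auto simp: Omega_u_def)
  then have "- p + - a \<in> A" by (simp add: minus_add)
  moreover have "y = (- p + - a) + a" using p by (simp add: add.assoc)
  ultimately show "y \<in> right_translate A a" unfolding right_translate_def by blast
next
  fix p x assume p: "p \<in> P" and "x \<in> right_translate A a"
  then obtain y where y: "y \<in> A" "x = y + a" unfolding right_translate_def by blast
  have "- p + y \<in> A" using A p y by (auto simp: Omega_u_def)
  moreover have "- p + x = (- p + y) + a" using y by (simp add: add.assoc)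
  ultimately show "- p + x \<in> right_translate A a" unfolding right_translate_def by blast
qed

lemma right_translate_inverse_in_Omega_u:
  fixes P :: "'a::topological_group_add set"
  assumes B: "B \<in> Omega_u P" and b: "b \<in> B"
  shows "right_translate B (-b) \<in> Omega_u P"
  unfolding Omega_u_def
proof (intro CollectI conjI ballI subsetI)
  show "closed (right_translate B (-b))" using B by (simp add: Omega_u_closed closed_right_translate)
  fix y assume "y \<in> uminus ` P"
  then obtain p where p: "p \<in> P" "y = - p" by blast
  have "- p + b \<in> B" using B b p by (auto simp: Omega_u_def)
  moreover have "y = (- p + b) + - b" using p by (simp add: add.assoc)
  ultimately show "y \<in> right_translate B (-b)" unfolding right_translate_def by blast
next
  fix p x assume p: "p \<in> P" and "x \<in> right_translate B (-b)"
  then obtain y where y: "y \<in> B" "x = y + - b" unfolding right_translate_def by blast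
  have "- p + y \<in> B" using B p y by (auto simp: Omega_u_def)
  moreover have "- p + x = (- p + y) + - b" using y by (simp only: add.assoc)
  ultimately show "- p + x \<in> right_translate B (-b)" unfolding right_translate_def by blast
qed

text \<open>If \<open>0 \<in> P\<close> then \<open>0 \<in> A\<close> for \<open>A \<in> \<Omega>\<^sub>u\<close>, so \<open>a\<close> lies in \<open>A \<cdot> a\<close>.\<close>
lemma mem_right_translate_Omega_u:
  assumes "A \<in> Omega_u P" and "0 \<in> P"
  shows "a \<in> right_translate A (a::'a::{topological_space,group_add})"
proof -
  have "0 \<in> A" using assms by (force simp: Omega_u_def)
  then show ?thesis unfolding right_translate_def by (metis add_0 image_eqI)
qed

subsection \<open>The Fell subbasis\<close>

definition fell_subbasis :: "'a::topological_space set set set" where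
  "fell_subbasis = {{A. A \<inter> K = {}} | K. compact K} \<union> {{A. A \<inter> U \<noteq> {}} | U. open U}"

lemma openin_fell_topology:
  "openin fell_topology U \<longleftrightarrow> (\<exists>U'. generate_topology_on fell_subbasis U' \<and> U = U' \<inter> {A. closed A})"
  unfolding fell_topology_def fell_subbasis_def openin_subtopology openin_topology_generated_by_iff
  by blast

lemma generate_fell_miss: "compact K \<Longrightarrow> generate_topology_on fell_subbasis {A. A \<inter> K = {}}"
  by (rule generate_topology_on.Basis) (auto simp: fell_subbasis_def)

lemma generate_fell_hit: "open U \<Longrightarrow> generate_topology_on fell_subbasis {A. A \<inter> U \<noteq> {}}"
  by (rule generate_topology_on.Basis) (auto simp: fell_subbasis_def)

subsection \<open>Continuity of \<open>(B, b) \<mapsto> B \<cdot> b\<^sup>-\<^sup>1\<close>\<close>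

definition inverse_translation_nbhd :: "'a::{topological_space,group_add} set set \<Rightarrow> 'a set \<Rightarrow> 'a \<Rightarrow> bool"
  where "inverse_translation_nbhd X B0 b0 \<longleftrightarrow>
    (\<exists>N T. generate_topology_on fell_subbasis N \<and> open T \<and> B0 \<in> N \<and> b0 \<in> T \<and>
           (\<forall>B\<in>N. \<forall>b\<in>T. right_translate B (-b) \<in> X))"

lemma inverse_translation_nbhd_Int:
  assumes "inverse_translation_nbhd X1 B0 b0" and "inverse_translation_nbhd X2 B0 b0"
  shows "inverse_translation_nbhd (X1 \<inter> X2) B0 b0"
proof -
  obtain N1 T1 N2 T2 where
    "generate_topology_on fell_subbasis N1" "open T1" "B0 \<in> N1" "b0 \<in> T1"
    "\<forall>B\<in>N1. \<forall>b\<in>T1. right_translate B (-b) \<in> X1"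
    "generate_topology_on fell_subbasis N2" "open T2" "B0 \<in> N2" "b0 \<in> T2"
    "\<forall>B\<in>N2. \<forall>b\<in>T2. right_translate B (-b) \<in> X2"
    using assms unfolding inverse_translation_nbhd_def by blast
  then show ?thesis unfolding inverse_translation_nbhd_def
    by (intro exI[of _ "N1 \<inter> N2"] exI[of _ "T1 \<inter> T2"]) (auto intro: generate_topology_on.Int)
qed

lemma inverse_translation_nbhd_mono:
  "inverse_translation_nbhd X B0 b0 \<Longrightarrow> X \<subseteq> Y \<Longrightarrow> inverse_translation_nbhd Y B0 b0"
  unfolding inverse_translation_nbhd_def by blast

text \<open>Hit sets: if \<open>x - b\<^sub>0 \<in> U\<close> for some \<open>x \<in> B\<^sub>0\<close>, the same holds near \<open>x\<close> and \<open>b\<^sub>0\<close>.\<close>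
lemma inverse_translation_nbhd_hit:
  fixes U :: "'a::topological_group_add set"
  assumes U: "open U" and hit: "right_translate B0 (-b0) \<inter> U \<noteq> {}"
  shows "inverse_translation_nbhd {A. A \<inter> U \<noteq> {}} B0 b0"
proof -
  obtain x where x: "x \<in> B0" "x + - b0 \<in> U"
    using hit unfolding right_translate_def by blast
  define W where "W = (\<lambda>z::'a \<times> 'a. fst z + - snd z) -` U"
  have "open W" unfolding W_def by (rule open_vimage[OF U]) (intro continuous_intros)
  moreover have "(x, b0) \<in> W" using x by (simp add: W_def)
  ultimately obtain S T where ST: "open S" "open T" "x \<in> S" "b0 \<in> T" "S \<times> T \<subseteq> W"
    by (rule open_prod_elim) blast
  have "right_translate B (-b) \<inter> U \<noteq> {}" if B: "B \<inter> S \<noteq> {}" and b: "b \<in> T" for B b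
  proof -
    obtain y where "y \<in> B" "y \<in> S" using B by blast
    then have "y \<in> B" "y + - b \<in> U" using ST \<open>b \<in> T\<close> by (auto simp: W_def)
    then show ?thesis unfolding right_translate_def by blast
  qed
  then show ?thesis unfolding inverse_translation_nbhd_def
    using ST x by (intro exI[of _ "{A. A \<inter> S \<noteq> {}}"] exI[of _ T]) (auto intro: generate_fell_hit)
qed

lemma compact_zero_nbhd_avoiding:
  fixes K F :: "'a::{topological_group_add,t2_space} set"
  assumes lc: "locally_compact_space (euclidean :: 'a topology)"
    and K: "compact K" and F: "closed F" and disj: "K \<inter> F = {}"
  obtains C Q where "compact C" "open Q" "0 \<in> Q" "Q \<subseteq> C" "\<And>k c. k \<in> K \<Longrightarrow> c \<in> C \<Longrightarrow> k + c \<notin> F"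
proof -
  define W where "W = (\<lambda>z::'a \<times> 'a. snd z + fst z) -` (- F)"
  have "open W" unfolding W_def by (rule open_vimage) (use F in auto, intro continuous_intros)
  moreover have "{0} \<times> K \<subseteq> W" using disj by (auto simp: W_def)
  ultimately obtain X0 where X0: "0 \<in> X0" "open X0" "X0 \<times> K \<subseteq> W"
    by (metis Elementary_Topology.tube_lemma[OF K])
  have "Hausdorff_space (euclidean :: 'a topology)"
    unfolding Hausdorff_space_def disjnt_def by (simp add: separation_t2)
  then have "neighbourhood_base_of (compactin euclidean) (euclidean :: 'a topology)"
    using lc locally_compact_space_neighbourhood_base by blast
  then have "\<exists>Q C. openin euclidean Q \<and> compactin euclidean C \<and> 0 \<in> Q \<and> Q \<subseteq> C \<and> C \<subseteq> X0"
    unfolding neighbourhood_base_of using X0 by (metis open_openin)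
  then obtain Q C where "open Q" "compact C" "0 \<in> Q" "Q \<subseteq> C" "C \<subseteq> X0"
    by auto
  moreover have "k + c \<notin> F" if "k \<in> K" "c \<in> C" for k c
  proof -
    have "(c, k) \<in> W" using that \<open>C \<subseteq> X0\<close> X0(3) by blast
    then show ?thesis by (simp add: W_def)
  qed
  ultimately show ?thesis using that by blast
qed

text \<open>Miss sets: if \<open>B\<^sub>0 \<cdot> b\<^sub>0\<^sup>-\<^sup>1\<close> misses the compact set \<open>K\<close>, then \<open>B \<cdot> b\<^sup>-\<^sup>1\<close> misses \<open>K\<close> whenever
  \<open>B\<close> misses the compact set \<open>(K + b\<^sub>0) + C\<close> and \<open>-b\<^sub>0 + b \<in> Q\<close>, with \<open>C\<close>, \<open>Q\<close> as above.\<close>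
lemma inverse_translation_nbhd_miss:
  fixes K :: "'a::{topological_group_add,t2_space} set"
  assumes lc: "locally_compact_space (euclidean :: 'a topology)"
    and K: "compact K" and B0: "closed B0" and miss: "right_translate B0 (-b0) \<inter> K = {}"
  shows "inverse_translation_nbhd {A. A \<inter> K = {}} B0 b0"
proof -
  define K' where "K' = right_translate K b0"
  have "compact K'" unfolding K'_def right_translate_def
    by (rule compact_continuous_image[OF _ K]) (intro continuous_intros)
  moreover have "K' \<inter> B0 = {}"
  proof -
    have "x + b0 \<notin> B0" if "x \<in> K" for x
    proof
      assume "x + b0 \<in> B0"
      then have "(x + b0) + - b0 \<in> right_translate B0 (-b0)" unfolding right_translate_def by blast
      then show False using miss that by (auto simp: add.assoc)
    qed
    then show ?thesis unfolding K'_def right_translate_def by blast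
  qed
  ultimately obtain C Q where CQ: "compact C" "open Q" "0 \<in> Q" "Q \<subseteq> C"
    and avoid: "\<And>k c. k \<in> K' \<Longrightarrow> c \<in> C \<Longrightarrow> k + c \<notin> B0"
    by (rule compact_zero_nbhd_avoiding[OF lc _ B0]) blast
  define KC where "KC = (\<lambda>z. fst z + snd z) ` (K' \<times> C)"
  define T where "T = (\<lambda>b. - b0 + b) -` Q"
  have "compact KC" unfolding KC_def
    by (rule compact_continuous_image[OF _ compact_Times[OF \<open>compact K'\<close> CQ(1)]])
      (intro continuous_intros)
  have "open T" unfolding T_def by (rule open_vimage[OF CQ(2)]) (intro continuous_intros)
  have "B0 \<inter> KC = {}"
  proof -
    have "z \<in> K' \<times> C \<Longrightarrow> fst z + snd z \<notin> B0" for z using avoid by (cases z) auto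
    then show ?thesis unfolding KC_def by blast
  qed
  have "right_translate B (-b) \<inter> K = {}" if B: "B \<inter> KC = {}" and b: "b \<in> T" for B b
  proof (rule ccontr)
    assume "right_translate B (-b) \<inter> K \<noteq> {}"
    then obtain x where x: "x \<in> B" "x + - b \<in> K" unfolding right_translate_def by blast
    have "x = ((x + - b) + b0) + (- b0 + b)" by (simp add: add.assoc)
    moreover have "(x + - b) + b0 \<in> K'" using x(2) unfolding K'_def right_translate_def by blast
    moreover have "- b0 + b \<in> C" using b CQ(4) by (auto simp: T_def)
    ultimately have "x \<in> KC" unfolding KC_def
      by (intro image_eqI[where x="((x + - b) + b0, - b0 + b)"]) auto
    then show False using B x(1) by blast
  qed
  moreover have "generate_topology_on fell_subbasis {A. A \<inter> KC = {}}"
    using \<open>compact KC\<close> by (rule generate_fell_miss)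
  moreover have "b0 \<in> T" using CQ(3) by (simp add: T_def)
  ultimately show ?thesis unfolding inverse_translation_nbhd_def
    using \<open>open T\<close> \<open>B0 \<inter> KC = {}\<close> by blast
qed

lemma inverse_translation_continuous:
  fixes X :: "'a::{topological_group_add,t2_space} set set"
  assumes lc: "locally_compact_space (euclidean :: 'a topology)"
    and X: "generate_topology_on fell_subbasis X" and B0: "closed B0"
  shows "right_translate B0 (-b0) \<in> X \<Longrightarrow> inverse_translation_nbhd X B0 b0"
  using X
proof (induction)
  case Empty
  then show ?case by simp
next
  case (Int X1 X2)
  then show ?case by (simp add: inverse_translation_nbhd_Int)
next
  case (UN \<K>)
  then obtain X where "X \<in> \<K>" "inverse_translation_nbhd X B0 b0" by blast
  then show ?case by (blast intro: inverse_translation_nbhd_mono)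
next
  case (Basis X)
  then consider K where "compact K" "X = {A. A \<inter> K = {}}" | U where "open U" "X = {A. A \<inter> U \<noteq> {}}"
    unfolding fell_subbasis_def by auto
  then show ?case
  proof cases
    case 1
    then show ?thesis using Basis.prems by (simp add: inverse_translation_nbhd_miss[OF lc _ B0])
  next
    case 2
    then show ?thesis using Basis.prems by (simp add: inverse_translation_nbhd_hit)
  qed
qed

lemma action_image_nbhd:
  fixes P :: "'a::{topological_group_add,t2_space} set"
  assumes lc: "locally_compact_space (euclidean :: 'a topology)"
    and semigroup: "\<forall>p\<in>P. \<forall>q\<in>P. p + q \<in> P" and "0 \<in> P"
    and U: "openin (subtopology fell_topology (Omega_u P)) U"
    and V: "open V" "V \<subseteq> P" and A: "A \<in> U" and a: "a \<in> V"
  obtains M where "openin (subtopology fell_topology (Omega_u P)) M" "right_translate A a \<in> M"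
    "M \<subseteq> (\<lambda>(A, a). right_translate A a) ` (U \<times> V)"
proof -
  obtain U' where U': "generate_topology_on fell_subbasis U'"
    and U_eq: "U = U' \<inter> {A. closed A} \<inter> Omega_u P"
    using U unfolding openin_subtopology openin_fell_topology by blast
  define Y where "Y = right_translate A a"
  have "Y \<in> Omega_u P"
    unfolding Y_def using A a V(2) U_eq by (intro right_translate_in_Omega_u[OF semigroup]) auto
  have "right_translate Y (-a) \<in> U'"
    using A U_eq unfolding Y_def right_translate_def image_image by (simp add: add.assoc)
  then have "inverse_translation_nbhd U' Y a"
    by (rule inverse_translation_continuous[OF lc U' Omega_u_closed[OF \<open>Y \<in> Omega_u P\<close>]])
  then obtain N T where N: "generate_topology_on fell_subbasis N" and "open T" "Y \<in> N" "a \<in> T"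
    and NT: "\<And>B b. B \<in> N \<Longrightarrow> b \<in> T \<Longrightarrow> right_translate B (-b) \<in> U'"
    unfolding inverse_translation_nbhd_def by blast
  define M where "M = (N \<inter> {B. B \<inter> (T \<inter> V) \<noteq> {}}) \<inter> {B. closed B} \<inter> Omega_u P"
  have "generate_topology_on fell_subbasis (N \<inter> {B. B \<inter> (T \<inter> V) \<noteq> {}})"
    using N generate_fell_hit[OF open_Int[OF \<open>open T\<close> V(1)]] by (rule generate_topology_on.Int)
  then have "openin (subtopology fell_topology (Omega_u P)) M"
    unfolding M_def openin_subtopology openin_fell_topology by blast
  moreover have "Y \<in> M"
  proof -
    have "A \<in> Omega_u P" using A U_eq by blast
    then have "a \<in> Y" unfolding Y_def using \<open>0 \<in> P\<close> by (rule mem_right_translate_Omega_u)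
    then show ?thesis
      unfolding M_def using \<open>Y \<in> N\<close> \<open>a \<in> T\<close> a \<open>Y \<in> Omega_u P\<close> Omega_u_closed by blast
  qed
  moreover have "M \<subseteq> (\<lambda>(A, a). right_translate A a) ` (U \<times> V)"
  proof
    fix B assume "B \<in> M"
    then obtain b where B: "B \<in> N" "B \<in> Omega_u P" and b: "b \<in> B" "b \<in> T" "b \<in> V"
      unfolding M_def by blast
    have "right_translate B (-b) \<in> Omega_u P"
      using B(2) b(1) by (rule right_translate_inverse_in_Omega_u)
    moreover have "right_translate B (-b) \<in> U'" using NT[OF B(1) b(2)] .
    ultimately have "(right_translate B (-b), b) \<in> U \<times> V"
      using b(3) U_eq Omega_u_closed by blast
    then show "B \<in> (\<lambda>(A, a). right_translate A a) ` (U \<times> V)"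
      by (rule rev_image_eqI) (simp add: right_translate_cancel)
  qed
  ultimately show ?thesis using that unfolding Y_def by blast
qed

theorem mainTheorem6:
  fixes P :: "('a::{topological_group_add, t2_space, second_countable_topology}) set"
  assumes "locally_compact_space (euclidean :: 'a topology)"
    and "closed P"
    and "0 \<in> P"
    and "\<forall>p\<in>P. \<forall>q\<in>P. p + q \<in> P"
    and "{p + - q | p q. p \<in> P \<and> q \<in> P} = UNIV"
    and "P \<subseteq> closure (interior P)"
  shows "open_map
           (prod_topology (subtopology fell_topology (Omega_u P))
                          (subtopology euclidean (interior P)))
           (subtopology fell_topology (Omega_u P))
           (\<lambda>(A, a). right_translate A a)"
  unfolding open_map_def
proof (intro allI impI)
  let ?act = "\<lambda>(A, a). right_translate A a"
  fix S assume S: "openin (prod_topology (subtopology fell_topology (Omega_u P))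
                                         (subtopology euclidean (interior P))) S"
  show "openin (subtopology fell_topology (Omega_u P)) (?act ` S)"
  proof (rule openin_subopen[THEN iffD2], rule ballI)
    fix Y assume "Y \<in> ?act ` S"
    then obtain A a where Aa: "(A, a) \<in> S" and Y: "Y = right_translate A a" by auto
    obtain U V where U: "openin (subtopology fell_topology (Omega_u P)) U"
      and V: "openin (subtopology euclidean (interior P)) V" and "A \<in> U" "a \<in> V" "U \<times> V \<subseteq> S"
      using openin_prod_topology_alt[THEN iffD1, OF S, rule_format, OF Aa] by blast
    have "open V" using V by (rule openin_open_trans) simp
    have "V \<subseteq> P" using openin_imp_subset[OF V] interior_subset by (rule subset_trans)
    obtain M where M: "openin (subtopology fell_topology (Omega_u P)) M" "right_translate A a \<in> M"
      and M_sub: "M \<subseteq> ?act ` (U \<times> V)"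
      by (rule action_image_nbhd[OF assms(1,4,3) U \<open>open V\<close> \<open>V \<subseteq> P\<close> \<open>A \<in> U\<close> \<open>a \<in> V\<close>])
    have "M \<subseteq> ?act ` S" using M_sub image_mono[OF \<open>U \<times> V \<subseteq> S\<close>] by (rule subset_trans)
    then show "\<exists>M. openin (subtopology fell_topology (Omega_u P)) M \<and> Y \<in> M \<and> M \<subseteq> ?act ` S"
      using M Y by (intro exI[of _ M] conjI) simp_all
  qed
qed

end
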